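(* Let $\mathcal T$ be an orbital category and $\mathcal F$ a $\mathcal T$-family. The preimage of $\{\mathcal F\}$ under $c:\mathrm{wIndSys}_{\mathcal T}\to\mathrm{Fam}_{\mathcal T}$ is exactly the image of the restriction of $E^{\mathcal T}_{\mathcal F}$ to one-color $\mathcal F$-weak indexing systems.
   Context: For a small category $\mathcal T$, $\mathbb F_{\mathcal T}$ is the full subcategory of $\mathrm{Fun}(\mathcal T^{op},\mathrm{Set})$ on finite coproducts of representables; $\mathcal T$ is orbital if $\mathbb F_{\mathcal T}$ has pullbacks. $\mathbb F_V:=\mathbb F_{\mathcal T,/V}$, $*_V$ terminal; for $U\to V$, $\mathrm{Res}^V_U$ is pullback and $\mathrm{Ind}^V_U$ postcomposition. A full $\mathcal T$-subcategory $\mathcal C$ assigns isomorphism-closed classes $\mathcal C_V\subseteq\mathrm{Ob}\,\mathbb F_V$ stable under all restrictions. For $S\in\mathbb F_V$ with orbits $U\in\mathrm{Orb}(S)$ and $T_U\in\mathbb F_U$, $\coprod_U^ST_U:=\coprod_U\mathrm{Ind}_U^VT_U$. A $\mathcal T$-weak indexing system is a full $\mathcal T$-subcategory $\mathcal C$ with $\mathcal C_V\neq\emptyset\Rightarrow *_V\in\mathcal C_V$ and closed under $\coprod^S_U T_U$ for $S\in\mathcal C_V$, $T_U\in\mathcal C_U$; it has one color if all $\mathcal C_V$ are nonempty. $\mathrm{wIndSys}_{\mathcal T}$ is their poset under inclusion. A $\mathcal T$-family is a full subcategory $\mathcal F$ such that $V\to W$ with $W\in\mathcal F$ implies $V\in\mathcal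 F$; $\mathrm{Fam}_{\mathcal T}$ is their poset. A $\mathcal T$-family $\mathcal F$ is itself orbital (with $\mathbb F_{\mathcal F,/V}=\mathbb F_V$ for $V\in\mathcal F$), so $\mathcal F$-weak indexing systems are defined. $c(\mathcal C)=\{V\mid *_V\in\mathcal C_V\}$. For an $\mathcal F$-weak indexing system $\mathcal C$, $E^{\mathcal T}_{\mathcal F}\mathcal C$ is the $\mathcal T$-weak indexing system with $(E^{\mathcal T}_{\mathcal F}\mathcal C)_V=\mathcal C_V$ for $V\in\mathcal F$ and $=\emptyset$ otherwise. *)

theory Defs
  imports Main
begin

text \<open>A small category: objects, hom-sets, composition (Comp g f = g after f), identities.\<close>
record ('o, 'm) cat =
  Obj  :: "'o set"
  Hom  :: "'o \<Rightarrow> 'o \<Rightarrow> 'm set"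
  Comp :: "'m \<Rightarrow> 'm \<Rightarrow> 'm"
  Ident :: "'o \<Rightarrow> 'm"

definition is_category :: "('o, 'm) cat \<Rightarrow> bool" where
  "is_category T \<longleftrightarrow>
     (\<forall>a b. Hom T a b \<noteq> {} \<longrightarrow> a \<in> Obj T \<and> b \<in> Obj T) \<and>
     (\<forall>a\<in>Obj T. Ident T a \<in> Hom T a a) \<and>
     (\<forall>a\<in>Obj T. \<forall>b\<in>Obj T. \<forall>c\<in>Obj T. \<forall>f\<in>Hom T a b. \<forall>g\<in>Hom T b c.
         Comp T g f \<in> Hom T a c) \<and>
     (\<forall>a\<in>Obj T. \<forall>b\<in>Obj T. \<forall>f\<in>Hom T a b.
         Comp T (Ident T b) f = f \<and> Comp T f (Ident T a) = f) \<and>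
     (\<forall>a\<in>Obj T. \<forall>b\<in>Obj T. \<forall>c\<in>Obj T. \<forall>d\<in>Obj T.
       \<forall>f\<in>Hom T a b. \<forall>g\<in>Hom T b c. \<forall>h\<in>Hom T c d.
         Comp T h (Comp T g f) = Comp T (Comp T h g) f)"

text \<open>An object of F_T (a finite coproduct of representables) is a list of objects of T.
  By the Yoneda lemma, a morphism from the coproduct of the xs!i to the coproduct of the ys!j
  is, for each i, a choice of an index j and a morphism xs!i to ys!j in T.  We encode it as a
  function nat to (nat * 'm), only its values on i < length xs being relevant.\<close>

definition fobj :: "('o, 'm) cat \<Rightarrow> 'o list \<Rightarrow> bool" where
  "fobj T xs \<longleftrightarrow> set xs \<subseteq> Obj T"

definition fmor :: "('o, 'm) cat \<Rightarrow> 'o list \<Rightarrow> 'o list \<Rightarrow> (nat \<Rightarrow> nat \<times> 'm) \<Rightarrow> bool" where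
  "fmor T xs ys g \<longleftrightarrow>
     (\<forall>i<length xs. fst (g i) < length ys \<and> snd (g i) \<in> Hom T (xs ! i) (ys ! fst (g i)))"

definition fmor_eq :: "'o list \<Rightarrow> (nat \<Rightarrow> nat \<times> 'm) \<Rightarrow> (nat \<Rightarrow> nat \<times> 'm) \<Rightarrow> bool" where
  "fmor_eq xs g h \<longleftrightarrow> (\<forall>i<length xs. g i = h i)"

definition fcomp :: "('o, 'm) cat \<Rightarrow> (nat \<Rightarrow> nat \<times> 'm) \<Rightarrow> (nat \<Rightarrow> nat \<times> 'm) \<Rightarrow> (nat \<Rightarrow> nat \<times> 'm)" where
  "fcomp T h g = (\<lambda>i. (fst (h (fst (g i))), Comp T (snd (h (fst (g i)))) (snd (g i))))"

definition fid :: "('o, 'm) cat \<Rightarrow> 'o list \<Rightarrow> (nat \<Rightarrow> nat \<times> 'm)" where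
  "fid T xs = (\<lambda>i. (i, Ident T (xs ! i)))"

definition is_pullback ::
  "('o, 'm) cat \<Rightarrow> 'o list \<Rightarrow> 'o list \<Rightarrow> 'o list \<Rightarrow> (nat \<Rightarrow> nat \<times> 'm) \<Rightarrow> (nat \<Rightarrow> nat \<times> 'm)
     \<Rightarrow> 'o list \<Rightarrow> (nat \<Rightarrow> nat \<times> 'm) \<Rightarrow> (nat \<Rightarrow> nat \<times> 'm) \<Rightarrow> bool" where
  "is_pullback T xs ys zs a b P pa pb \<longleftrightarrow>
     fobj T P \<and> fmor T P xs pa \<and> fmor T P ys pb \<and>
     fmor_eq P (fcomp T a pa) (fcomp T b pb) \<and>
     (\<forall>W qa qb. fobj T W \<and> fmor T W xs qa \<and> fmor T W ys qb \<and>
                fmor_eq W (fcomp T a qa) (fcomp T b qb) \<longrightarrow>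
        (\<exists>u. fmor T W P u \<and> fmor_eq W (fcomp T pa u) qa \<and> fmor_eq W (fcomp T pb u) qb \<and>
             (\<forall>u'. fmor T W P u' \<and> fmor_eq W (fcomp T pa u') qa \<and> fmor_eq W (fcomp T pb u') qb
                   \<longrightarrow> fmor_eq W u u')))"

definition orbital :: "('o, 'm) cat \<Rightarrow> bool" where
  "orbital T \<longleftrightarrow>
     (\<forall>xs ys zs a b. fobj T xs \<and> fobj T ys \<and> fobj T zs \<and> fmor T xs zs a \<and> fmor T ys zs b \<longrightarrow>
        (\<exists>P pa pb. is_pullback T xs ys zs a b P pa pb))"

text \<open>An object of F_V = F_T/V is a list of pairs (U_i, f_i) with f_i : U_i \<rightarrow> V; the pairs
  are exactly its orbits.\<close>

definition sobj :: "('o, 'm) cat \<Rightarrow> 'o \<Rightarrow> ('o \<times> 'm) list \<Rightarrow> bool" where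
  "sobj T V S \<longleftrightarrow> (\<forall>p\<in>set S. fst p \<in> Obj T \<and> snd p \<in> Hom T (fst p) V)"

definition smor :: "('o, 'm) cat \<Rightarrow> ('o \<times> 'm) list \<Rightarrow> ('o \<times> 'm) list \<Rightarrow> (nat \<Rightarrow> nat \<times> 'm) \<Rightarrow> bool" where
  "smor T S S' g \<longleftrightarrow> fmor T (map fst S) (map fst S') g \<and>
     (\<forall>i<length S. Comp T (snd (S' ! fst (g i))) (snd (g i)) = snd (S ! i))"

definition siso :: "('o, 'm) cat \<Rightarrow> ('o \<times> 'm) list \<Rightarrow> ('o \<times> 'm) list \<Rightarrow> bool" where
  "siso T S S' \<longleftrightarrow> (\<exists>g h. smor T S S' g \<and> smor T S' S h \<and>
       fmor_eq (map fst S) (fcomp T h g) (fid T (map fst S)) \<and>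
       fmor_eq (map fst S') (fcomp T g h) (fid T (map fst S')))"

definition term_obj :: "('o, 'm) cat \<Rightarrow> 'o \<Rightarrow> ('o \<times> 'm) list" where
  "term_obj T V = [(V, Ident T V)]"

text \<open>R (in F_U) is a restriction Res^V_U S along f : U \<rightarrow> V, i.e. a pullback of
  S \<rightarrow> V \<leftarrow> U in F_T, regarded over U via its projection.\<close>
definition is_res :: "('o, 'm) cat \<Rightarrow> 'm \<Rightarrow> ('o \<times> 'm) list \<Rightarrow> ('o \<times> 'm) list \<Rightarrow> 'o \<Rightarrow> 'o \<Rightarrow> bool" where
  "is_res T f S R U V \<longleftrightarrow>
     (\<exists>pa pb. is_pullback T (map fst S) [U] [V] (\<lambda>i. (0, snd (S ! i))) (\<lambda>i. (0, f))
                 (map fst R) pa pb \<and>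
              (\<forall>k<length R. snd (R ! k) = snd (pb k)))"

text \<open>Induction along the structure maps: the coproduct over the orbits (U_i,f_i) of S of
  Ind^V_{U_i} (Ts i).\<close>
definition ind_coprod :: "('o, 'm) cat \<Rightarrow> ('o \<times> 'm) list \<Rightarrow> (nat \<Rightarrow> ('o \<times> 'm) list) \<Rightarrow> ('o \<times> 'm) list" where
  "ind_coprod T S Ts =
     concat (map (\<lambda>i. map (\<lambda>p. (fst p, Comp T (snd (S ! i)) (snd p))) (Ts i)) [0..<length S])"

definition full_Tsubcat :: "('o, 'm) cat \<Rightarrow> ('o \<Rightarrow> ('o \<times> 'm) list set) \<Rightarrow> bool" where
  "full_Tsubcat T C \<longleftrightarrow>
     (\<forall>V. V \<notin> Obj T \<longrightarrow> C V = {}) \<and>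
     (\<forall>V\<in>Obj T. \<forall>S\<in>C V. sobj T V S) \<and>
     (\<forall>V\<in>Obj T. \<forall>S\<in>C V. \<forall>S'. sobj T V S' \<and> siso T S S' \<longrightarrow> S' \<in> C V) \<and>
     (\<forall>U\<in>Obj T. \<forall>V\<in>Obj T. \<forall>f\<in>Hom T U V. \<forall>S\<in>C V. \<forall>R.
         sobj T U R \<and> is_res T f S R U V \<longrightarrow> R \<in> C U)"

definition wIndSys :: "('o, 'm) cat \<Rightarrow> ('o \<Rightarrow> ('o \<times> 'm) list set) \<Rightarrow> bool" where
  "wIndSys T C \<longleftrightarrow> full_Tsubcat T C \<and>
     (\<forall>V\<in>Obj T. C V \<noteq> {} \<longrightarrow> term_obj T V \<in> C V) \<and>
     (\<forall>V\<in>Obj T. \<forall>S\<in>C V. \<forall>Ts. (\<forall>i<length S. Ts i \<in> C (fst (S ! i))) \<longrightarrow>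
         ind_coprod T S Ts \<in> C V)"

definition one_color :: "('o, 'm) cat \<Rightarrow> ('o \<Rightarrow> ('o \<times> 'm) list set) \<Rightarrow> bool" where
  "one_color T C \<longleftrightarrow> (\<forall>V\<in>Obj T. C V \<noteq> {})"

definition colors :: "('o, 'm) cat \<Rightarrow> ('o \<Rightarrow> ('o \<times> 'm) list set) \<Rightarrow> 'o set" where
  "colors T C = {V \<in> Obj T. term_obj T V \<in> C V}"

definition is_family :: "('o, 'm) cat \<Rightarrow> 'o set \<Rightarrow> bool" where
  "is_family T F \<longleftrightarrow> F \<subseteq> Obj T \<and>
     (\<forall>V\<in>Obj T. \<forall>W\<in>F. Hom T V W \<noteq> {} \<longrightarrow> V \<in> F)"

definition subcat :: "('o, 'm) cat \<Rightarrow> 'o set \<Rightarrow> ('o, 'm) cat" where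
  "subcat T F = T\<lparr>Obj := F\<rparr>"

definition extE :: "'o set \<Rightarrow> ('o \<Rightarrow> ('o \<times> 'm) list set) \<Rightarrow> ('o \<Rightarrow> ('o \<times> 'm) list set)" where
  "extE F C = (\<lambda>V. if V \<in> F then C V else {})"

end

theory Submission
  imports Defs
begin

text \<open>A family F is closed under maps into it, so every object of F_T mapping to some V \<in> F
  already lives over F: slices, restrictions (pullbacks along U \<rightarrow> V with U \<in> F) and
  hence the weak indexing system axioms read the same in T and in F, for any C vanishing
  outside F.  A weak indexing system vanishes outside its colours, because a nonempty C_V
  contains *_V; and a one-colour F-weak indexing system has exactly F as its colours.\<close>

lemma Obj_subcat [simp]: "Obj (subcat T F) = F"
  and Hom_subcat [simp]: "Hom (subcat T F) = Hom T"
  and Comp_subcat [simp]: "Comp (subcat T F) = Comp T"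
  and Ident_subcat [simp]: "Ident (subcat T F) = Ident T"
  by (simp_all add: subcat_def)

lemma fmor_subcat [simp]: "fmor (subcat T F) = fmor T"
  and fcomp_subcat [simp]: "fcomp (subcat T F) = fcomp T"
  and siso_subcat [simp]: "siso (subcat T F) = siso T"
  and term_obj_subcat [simp]: "term_obj (subcat T F) = term_obj T"
  and ind_coprod_subcat [simp]: "ind_coprod (subcat T F) = ind_coprod T"
  by (intro ext; simp add: fmor_def fcomp_def fid_def smor_def siso_def term_obj_def
      ind_coprod_def)+

lemma fobj_subcat [simp]: "fobj (subcat T F) xs \<longleftrightarrow> set xs \<subseteq> F"
  by (simp add: fobj_def)

lemma family_subset_Obj: "is_family T F \<Longrightarrow> F \<subseteq> Obj T"
  by (simp add: is_family_def)

lemma family_closed_under_maps: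
  assumes "is_family T F" "W \<in> F" "V \<in> Obj T" "f \<in> Hom T V W"
  shows "V \<in> F"
  using assms unfolding is_family_def by blast

lemma sobj_fst_in_family:
  assumes "is_family T F" "V \<in> F" "sobj T V S"
  shows "set (map fst S) \<subseteq> F"
  using assms family_closed_under_maps[OF assms(1,2)] unfolding sobj_def by fastforce

lemma sobj_subcat_iff:
  assumes "is_family T F" "V \<in> F"
  shows "sobj (subcat T F) V S \<longleftrightarrow> sobj T V S"
  using sobj_fst_in_family[OF assms] family_subset_Obj[OF assms(1)]
  unfolding sobj_def by auto

lemma fmor_singleton_family:
  assumes "is_family T F" "U \<in> F" "fobj T W" "fmor T W [U] q"
  shows "set W \<subseteq> F"
proof
  fix x assume "x \<in> set W"
  then obtain i where i: "i < length W" "W ! i = x" by (auto simp: in_set_conv_nth)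
  then have "snd (q i) \<in> Hom T x U" "x \<in> Obj T"
    using assms(3,4) unfolding fmor_def fobj_def by auto
  then show "x \<in> F" using family_closed_under_maps[OF assms(1,2)] by blast
qed

text \<open>Every cone over a cospan with a leg [U] \<rightarrow> zs, U \<in> F, has its apex over F, so the
  universal property may equivalently be tested in F.\<close>

lemma is_pullback_subcat_iff:
  assumes "is_family T F" "U \<in> F" "set P \<subseteq> F"
  shows "is_pullback (subcat T F) xs [U] zs a b P pa pb \<longleftrightarrow> is_pullback T xs [U] zs a b P pa pb"
proof -
  have F: "F \<subseteq> Obj T" using family_subset_Obj[OF assms(1)] .
  have cone: "fobj T W \<and> fmor T W [U] qb \<longleftrightarrow> set W \<subseteq> F \<and> fmor T W [U] qb" for W qb
    using fmor_singleton_family[OF assms(1,2), of W qb] F unfolding fobj_def by blast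
  show ?thesis
    unfolding is_pullback_def fobj_subcat fmor_subcat fcomp_subcat
    using assms(3) F cone by (simp add: fobj_def) blast
qed

lemma is_res_subcat_iff:
  assumes "is_family T F" "U \<in> F" "set (map fst R) \<subseteq> F"
  shows "is_res (subcat T F) f S R U V \<longleftrightarrow> is_res T f S R U V"
  unfolding is_res_def Hom_subcat is_pullback_subcat_iff[OF assms] ..

lemma ball_Obj_iff_ball_family:
  assumes "is_family T F" "\<And>V. V \<in> Obj T \<Longrightarrow> V \<notin> F \<Longrightarrow> P V"
  shows "(\<forall>V\<in>Obj T. P V) \<longleftrightarrow> (\<forall>V\<in>F. P V)"
  using assms family_subset_Obj[OF assms(1)] by blast

lemma full_Tsubcat_subcat_iff:
  assumes fam: "is_family T F" and supp: "\<And>V. V \<notin> F \<Longrightarrow> C V = {}"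
  shows "full_Tsubcat (subcat T F) C \<longleftrightarrow> full_Tsubcat T C"
proof -
  have F: "F \<subseteq> Obj T" using family_subset_Obj[OF fam] .
  have empty: "(\<forall>V. V \<notin> F \<longrightarrow> C V = {}) \<longleftrightarrow> (\<forall>V. V \<notin> Obj T \<longrightarrow> C V = {})"
    using supp F by blast
  have sobj: "(\<forall>V\<in>F. \<forall>S\<in>C V. sobj (subcat T F) V S) \<longleftrightarrow> (\<forall>V\<in>Obj T. \<forall>S\<in>C V. sobj T V S)"
    using ball_Obj_iff_ball_family[OF fam] supp sobj_subcat_iff[OF fam] by simp
  have iso: "(\<forall>V\<in>F. \<forall>S\<in>C V. \<forall>S'. sobj (subcat T F) V S' \<and> siso T S S' \<longrightarrow> S' \<in> C V)
      \<longleftrightarrow> (\<forall>V\<in>Obj T. \<forall>S\<in>C V. \<forall>S'. sobj T V S' \<and> siso T S S' \<longrightarrow> S' \<in> C V)"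
    using ball_Obj_iff_ball_family[OF fam] supp sobj_subcat_iff[OF fam] by simp
  have res: "(\<forall>R. sobj (subcat T F) U R \<and> is_res (subcat T F) f S R U V \<longrightarrow> R \<in> C U)
      \<longleftrightarrow> (\<forall>R. sobj T U R \<and> is_res T f S R U V \<longrightarrow> R \<in> C U)" if "U \<in> F" for U V f S
    using sobj_subcat_iff[OF fam that] is_res_subcat_iff[OF fam that]
      sobj_fst_in_family[OF fam that] by blast
  have "(\<forall>U\<in>F. \<forall>V\<in>F. \<forall>f\<in>Hom T U V. \<forall>S\<in>C V. \<forall>R.
          sobj (subcat T F) U R \<and> is_res (subcat T F) f S R U V \<longrightarrow> R \<in> C U)
      \<longleftrightarrow> (\<forall>U\<in>Obj T. \<forall>V\<in>Obj T. \<forall>f\<in>Hom T U V. \<forall>S\<in>C V. \<forall>R.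
          sobj T U R \<and> is_res T f S R U V \<longrightarrow> R \<in> C U)"
    using F supp res family_closed_under_maps[OF fam] by (smt (verit) empty_iff subsetD)
  then show ?thesis
    unfolding full_Tsubcat_def Obj_subcat Hom_subcat siso_subcat using empty sobj iso by argo
qed

lemma wIndSys_subcat_iff:
  assumes fam: "is_family T F" and supp: "\<And>V. V \<notin> F \<Longrightarrow> C V = {}"
  shows "wIndSys (subcat T F) C \<longleftrightarrow> wIndSys T C"
  unfolding wIndSys_def Obj_subcat term_obj_subcat ind_coprod_subcat
  using full_Tsubcat_subcat_iff[OF assms] ball_Obj_iff_ball_family[OF fam] supp by simp

lemma wIndSys_empty_outside_colors:
  assumes "wIndSys T C" "V \<notin> colors T C"
  shows "C V = {}"
  using assms unfolding wIndSys_def full_Tsubcat_def colors_def by blast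

lemma wIndSys_subcat_empty_outside:
  assumes "wIndSys (subcat T F) C" "V \<notin> F"
  shows "C V = {}"
  using assms unfolding wIndSys_def full_Tsubcat_def by simp

lemma colors_one_color_subcat:
  assumes "is_family T F" "wIndSys (subcat T F) C" "one_color (subcat T F) C"
  shows "colors T C = F"
  using assms family_subset_Obj[OF assms(1)]
  unfolding colors_def one_color_def wIndSys_def full_Tsubcat_def by auto

lemma extE_eq_self:
  assumes "\<And>V. V \<notin> F \<Longrightarrow> C V = {}"
  shows "extE F C = C"
  unfolding extE_def using assms by (intro ext) auto

theorem mainTheorem8:
  fixes T :: "('o, 'm) cat" and F :: "'o set"
  assumes "is_category T" and "orbital T" and "is_family T F"
  shows "{C. wIndSys T C \<and> colors T C = F} =
         extE F ` {C. wIndSys (subcat T F) C \<and> one_color (subcat T F) C}"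
proof (intro equalityI subsetI)
  fix C assume "C \<in> {C. wIndSys T C \<and> colors T C = F}"
  then have C: "wIndSys T C" "colors T C = F" by auto
  have supp: "C V = {}" if "V \<notin> F" for V
    using wIndSys_empty_outside_colors[OF C(1)] C(2) that by simp
  have "wIndSys (subcat T F) C"
    using C(1) wIndSys_subcat_iff[OF \<open>is_family T F\<close>, of C, OF supp] by blast
  moreover have "one_color (subcat T F) C"
    using C(2) unfolding one_color_def colors_def by auto
  ultimately have "C \<in> {C. wIndSys (subcat T F) C \<and> one_color (subcat T F) C}" by simp
  moreover have "C = extE F C" using extE_eq_self[OF supp] by simp
  ultimately show "C \<in> extE F ` {C. wIndSys (subcat T F) C \<and> one_color (subcat T F) C}"
    by blast
next
  fix C assume "C \<in> extE F ` {C. wIndSys (subcat T F) C \<and> one_color (subcat T F) C}"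
  then obtain D where D: "wIndSys (subcat T F) D" "one_color (subcat T F) D"
    and C: "C = extE F D" by auto
  have supp: "D V = {}" if "V \<notin> F" for V
    using wIndSys_subcat_empty_outside[OF D(1) that] .
  have "C = D" unfolding C using extE_eq_self[OF supp] .
  moreover have "wIndSys T D"
    using D(1) wIndSys_subcat_iff[OF \<open>is_family T F\<close>, of D, OF supp] by blast
  ultimately show "C \<in> {C. wIndSys T C \<and> colors T C = F}"
    using colors_one_color_subcat[OF \<open>is_family T F\<close> D] by simp
qed

end
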